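(* Let $u\in S$. Then there exist $(\varepsilon_i)_{i\ge4}$ and $(\varepsilon'_i)_{i\ge4}$ in $\mathcal{D}^\infty$ such that $\sum_{i=4}^\infty\varepsilon_i\alpha^i=u+\sum_{i=4}^\infty\varepsilon'_i\alpha^i$.
   Context: Let $P(x)=x^4-x^3-x^2-x-1$. Its roots are $\beta=\beta_1\approx 1.9275$, a real root $\beta_2\approx-0.7748$, and a pair of complex conjugate roots $\beta_3\approx-0.0763+0.8147i$ and $\overline{\beta_3}$. For $i\in\mathbb{Z}$ put $\alpha^i=(\beta_2^i,\beta_3^i)\in\mathbb{R}\times\mathbb{C}$, with $\alpha^0=1=(1,1)$; arithmetic is componentwise and an integer $n$ is identified with $(n,n)$. $\mathcal{D}^\infty$ is the set of sequences $(\varepsilon_i)_{i\ge l}$, $l\in\mathbb{Z}$, with $\varepsilon_i\in\{0,1\}$ and containing no four consecutive $1$'s. $S$ is the set $\{\pm\sum_{i=0}^3c_i\alpha^i : c_i\in\{0,1\},\ c_0c_1c_2c_3\neq1111\}\cup\{\pm(\alpha^{-1}+1+\alpha^2),\pm(\alpha^{-2}+\alpha^{-1}+\alpha),\pm(\alpha^{-3}+\alpha^{-2}+1+\alpha^3)\}$. *)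

theory Defs
  imports Complex_Main
begin

definition beta2 :: real where
  "beta2 = (THE x::real. x^4 - x^3 - x^2 - x - 1 = 0 \<and> x < 0)"

definition beta3 :: complex where
  "beta3 = (THE z::complex. z^4 - z^3 - z^2 - z - 1 = 0 \<and> Im z > 0)"

definition alpha :: "int \<Rightarrow> real \<times> complex" where
  "alpha i = (beta2 powi i, beta3 powi i)"

definition lincomb :: "(int \<Rightarrow> int) \<Rightarrow> int set \<Rightarrow> real \<times> complex" where
  "lincomb c I = ((\<Sum>i\<in>I. of_int (c i) * fst (alpha i)), (\<Sum>i\<in>I. of_int (c i) * snd (alpha i)))"

definition S :: "(real \<times> complex) set" where
  "S = {lincomb (\<lambda>i. s * c i) {0..3} | s c.
          s \<in> {1, -1} \<and> (\<forall>i. c i \<in> {0, 1}) \<and> \<not> (\<forall>i\<in>{0..3}. c i = 1)}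
     \<union> {lincomb (\<lambda>_. s) {-1, 0, 2} | s. s \<in> {1, -1}}
     \<union> {lincomb (\<lambda>_. s) {-2, -1, 1} | s. s \<in> {1, -1}}
     \<union> {lincomb (\<lambda>_. s) {-3, -2, 0, 3} | s. s \<in> {1, -1}}"

text \<open>A digit sequence (eps_i)_{i >= l} in D^infinity (l a natural number here):
  digits in {0,1}, no four consecutive 1's. Values at indices below l are irrelevant.\<close>

definition Dinf_from :: "nat \<Rightarrow> (nat \<Rightarrow> nat) \<Rightarrow> bool" where
  "Dinf_from l eps \<longleftrightarrow> (\<forall>i\<ge>l. eps i \<in> {0, 1}) \<and>
     (\<forall>i\<ge>l. \<not> (eps i = 1 \<and> eps (i+1) = 1 \<and> eps (i+2) = 1 \<and> eps (i+3) = 1))"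

end

theory Submission
  imports Defs
begin

(*
  Up to sign, every element of S is the sum of alpha^i over one of eighteen explicit exponent
  sets J, and a change of sign only swaps the two digit sequences. For each J both sequences are
  chosen eventually periodic: prescribed by a finite set A below a threshold K and by a word W of
  period 4 from K on. At any x with |x| < 1 such a sequence has the value
  sum_{i in A} x^i + sum_{j in W} x^(K+j) / (1 - x^4), so the required equation is a rational
  identity in x, which holds modulo x^4 - x^3 - x^2 - x - 1 and hence at beta2 and beta3 at once.
  Both roots lie in the unit disc: the polynomial factors into (x - beta1) (x - beta2) and a real
  quadratic with negative discriminant and constant term q < 1, and beta3 is its root in the
  upper half plane, so |beta3|^2 = q.
*)

section \<open>The roots beta2 and beta3\<close>

definition tetranacci_poly :: "'a::comm_ring_1 \<Rightarrow> 'a" where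
  "tetranacci_poly x = x^4 - x^3 - x^2 - x - 1"

lemma tetranacci_poly_of_real:
  "tetranacci_poly (of_real x :: 'a::{real_algebra_1, comm_ring_1}) = of_real (tetranacci_poly x)"
  by (simp add: tetranacci_poly_def)

lemma tetranacci_poly_real_roots:
  obtains a b :: real
  where "19/10 \<le> a" "a \<le> 39/20" "tetranacci_poly a = 0"
    and "-(4/5) \<le> b" "b \<le> -(3/4)" "tetranacci_poly b = 0"
proof -
  have cont: "continuous_on T (tetranacci_poly :: real \<Rightarrow> real)" for T
    unfolding tetranacci_poly_def by (intro continuous_intros)
  have "tetranacci_poly (19/10 :: real) \<le> 0" "0 \<le> tetranacci_poly (39/20 :: real)"
       "tetranacci_poly (-(3/4) :: real) \<le> 0" "0 \<le> tetranacci_poly (-(4/5) :: real)"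
    by (simp_all add: tetranacci_poly_def power_divide)
  then show ?thesis
    using that cont IVT'[of "tetranacci_poly :: real \<Rightarrow> real" "19/10" 0 "39/20"]
      IVT2'[of "tetranacci_poly :: real \<Rightarrow> real" "-(3/4)" 0 "-(4/5)"]
    by force
qed

lemma tetranacci_poly_factor:
  fixes a b :: real and z :: "'a::{real_algebra_1, comm_ring_1}"
  assumes "tetranacci_poly a = 0" "tetranacci_poly b = 0" "a \<noteq> b"
  shows "tetranacci_poly z = (z - of_real a) * (z - of_real b) *
           (z^2 + of_real (a + b - 1) * z + of_real (a^2 + a*b + b^2 - a - b - 1))"
proof -
  \<comment> \<open>the quotient of the polynomial by \<open>z - a\<close>, evaluated at \<open>b\<close>\<close>
  define c where "c = b^3 + (a - 1) * b^2 + (a^2 - a - 1) * b + (a^3 - a^2 - a - 1)"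
  have "(b - a) * c = tetranacci_poly b - tetranacci_poly a"
    unfolding c_def tetranacci_poly_def
    by (simp add: algebra_simps power2_eq_square power3_eq_cube power4_eq_xxxx)
  then have "c = 0" using assms by simp
  have "tetranacci_poly z = (z - of_real a) * (z - of_real b) *
           (z^2 + of_real (a + b - 1) * z + of_real (a^2 + a*b + b^2 - a - b - 1))
         + (z - of_real a) * of_real c + of_real (tetranacci_poly a)"
    unfolding c_def tetranacci_poly_def
    by (simp add: algebra_simps power2_eq_square power3_eq_cube power4_eq_xxxx)
  then show ?thesis using \<open>c = 0\<close> assms(1) by simp
qed

lemma tetranacci_quadratic_factor_bounds:
  fixes a b :: real
  assumes a: "19/10 \<le> a" "a \<le> 39/20" and b: "-(4/5) \<le> b" "b \<le> -(3/4)"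
  shows "(a + b - 1)^2 < 4 * (a^2 + a*b + b^2 - a - b - 1)" "a^2 + a*b + b^2 - a - b - 1 < 1"
proof -
  have "a*a \<le> 39/20 * (39/20)" "19/10 * (19/10) \<le> a*a" using a by (intro mult_mono; simp)+
  moreover have "(-b)*(-b) \<le> 4/5 * (4/5)" "3/4 * (3/4) \<le> (-b)*(-b)" using b by (intro mult_mono; simp)+
  moreover have "a*(-b) \<le> 39/20 * (4/5)" "19/10 * (3/4) \<le> a*(-b)" using a b by (intro mult_mono; simp)+
  moreover have "(a + b - 1)^2 \<le> (1/5)^2" using a b by (intro power_mono) auto
  ultimately show "(a + b - 1)^2 < 4 * (a^2 + a*b + b^2 - a - b - 1)" "a^2 + a*b + b^2 - a - b - 1 < 1"
    using a b by (simp_all add: power2_eq_square)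
qed

lemma complex_quadratic_upper_root:
  fixes p q :: real
  assumes "p^2 < 4*q"
  shows "\<exists>w. {z::complex. z^2 + of_real p * z + of_real q = 0 \<and> 0 < Im z} = {w} \<and> (cmod w)^2 = q"
proof -
  define w where "w = Complex (-p/2) (sqrt (4*q - p^2) / 2)"
  have sq: "(sqrt (4*q - p^2))^2 = 4*q - p^2" using assms by simp
  have root: "w^2 + of_real p * w + of_real q = 0"
    using sq by (simp add: w_def complex_eq_iff power2_eq_square field_simps)
  have Im_w: "0 < Im w" using assms by (simp add: w_def)
  have "z = w" if z: "z^2 + of_real p * z + of_real q = 0" "0 < Im z" for z
  proof -
    have "(z - w) * (z + w + of_real p) = (z^2 + of_real p * z + of_real q) - (w^2 + of_real p * w + of_real q)"
      by (simp add: algebra_simps power2_eq_square)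
    then have "(z - w) * (z + w + of_real p) = 0" using z(1) root by simp
    moreover have "Im (z + w + of_real p) > 0" using z(2) Im_w by simp
    then have "z + w + of_real p \<noteq> 0" by (metis Im_complex_of_real of_real_0 less_irrefl)
    ultimately show ?thesis by simp
  qed
  moreover have "0 \<le> q" using assms zero_le_power2[of p] by linarith
  then have "(cmod w)^2 = q"
    using sq by (simp add: w_def cmod_def power_divide field_simps)
  ultimately show ?thesis using root Im_w by blast
qed

lemma tetranacci_poly_root_sets:
  obtains b :: real and w :: complex
  where "{x. tetranacci_poly x = 0 \<and> x < 0} = {b}" "\<bar>b\<bar> < 1"
    and "{z. tetranacci_poly z = 0 \<and> 0 < Im z} = {w}" "cmod w < 1"
proof -
  obtain a b :: real where a: "19/10 \<le> a" "a \<le> 39/20" "tetranacci_poly a = 0"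
    and b: "-(4/5) \<le> b" "b \<le> -(3/4)" "tetranacci_poly b = 0"
    by (rule tetranacci_poly_real_roots)
  define p where "p = a + b - 1"
  define q where "q = a^2 + a*b + b^2 - a - b - 1"
  have pq: "p^2 < 4*q" "q < 1"
    unfolding p_def q_def using tetranacci_quadratic_factor_bounds[OF a(1,2) b(1,2)] by auto
  have "a \<noteq> b" using a b by auto
  note factor = tetranacci_poly_factor[OF a(3) b(3) this, folded p_def q_def]
  have quadratic_pos: "x^2 + p * x + q > 0" for x :: real
  proof -
    have "x^2 + p * x + q = (x + p/2)^2 + (4*q - p^2)/4" by (simp add: power2_eq_square field_simps)
    also have "\<dots> > 0" using pq(1) by (intro add_nonneg_pos) auto
    finally show ?thesis .
  qed
  have "tetranacci_poly x = 0 \<longleftrightarrow> x = a \<or> x = b" for x :: real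
    using factor[of x] quadratic_pos[of x] by auto
  then have negative_roots: "{x. tetranacci_poly x = 0 \<and> x < 0} = {b}"
    using a b by auto
  have "tetranacci_poly z = 0 \<longleftrightarrow> z^2 + of_real p * z + of_real q = 0"
    if "0 < Im z" for z :: complex
  proof -
    have "z \<noteq> of_real a" "z \<noteq> of_real b" using that by auto
    then show ?thesis using factor[of z] by simp
  qed
  then have upper_roots: "{z::complex. tetranacci_poly z = 0 \<and> 0 < Im z}
      = {z. z^2 + of_real p * z + of_real q = 0 \<and> 0 < Im z}" by auto
  obtain w where w: "{z::complex. z^2 + of_real p * z + of_real q = 0 \<and> 0 < Im z} = {w}"
    "(cmod w)^2 = q"
    using complex_quadratic_upper_root[OF pq(1)] by blast
  then have "cmod w < 1" using pq(2) power_less_one_iff[of "cmod w" 2] by simp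
  then show ?thesis using that negative_roots upper_roots w(1) b by simp
qed

lemma beta2_beta3:
  shows tetranacci_poly_beta2: "tetranacci_poly beta2 = 0" and norm_beta2: "norm beta2 < 1"
    and tetranacci_poly_beta3: "tetranacci_poly beta3 = 0" and norm_beta3: "norm beta3 < 1"
proof -
  obtain b :: real and w :: complex where B: "{x. tetranacci_poly x = 0 \<and> x < 0} = {b}" "\<bar>b\<bar> < 1"
    and W: "{z. tetranacci_poly z = 0 \<and> 0 < Im z} = {w}" "cmod w < 1"
    by (rule tetranacci_poly_root_sets)
  have "beta2 = b" unfolding beta2_def
    using B(1) by (intro the_equality) (auto simp: set_eq_iff tetranacci_poly_def)
  moreover have "beta3 = w" unfolding beta3_def
    using W(1) by (intro the_equality) (auto simp: set_eq_iff tetranacci_poly_def)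
  ultimately show "tetranacci_poly beta2 = 0" "norm beta2 < 1" "tetranacci_poly beta3 = 0" "norm beta3 < 1"
    using B W by auto
qed

section \<open>Eventually periodic digit sequences\<close>

definition periodic_digits :: "nat set \<Rightarrow> nat \<Rightarrow> nat set \<Rightarrow> nat \<Rightarrow> nat" where
  "periodic_digits A K W n = (if n < K then of_bool (n \<in> A) else of_bool ((n - K) mod 4 \<in> W))"

definition periodic_value :: "nat set \<Rightarrow> nat \<Rightarrow> nat set \<Rightarrow> 'a::field \<Rightarrow> 'a" where
  "periodic_value A K W x = (\<Sum>i\<in>A. x^i) + (\<Sum>j\<in>W. x^(K+j)) / (1 - x^4)"

lemma sums_residue_class_powers:
  fixes x :: "'a::{real_normed_field,banach}"
  assumes "norm x < 1" "j < m"
  shows "(\<lambda>n. if K \<le> n \<and> (n - K) mod m = j then x^n else 0) sums (x^(K+j) / (1 - x^m))"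
proof -
  let ?f = "\<lambda>n. if K \<le> n \<and> (n - K) mod m = j then x^n else 0"
  let ?g = "\<lambda>k. K + j + m*k"
  have mono: "strict_mono ?g" using assms(2) by (intro strict_monoI) simp
  have zero: "?f n = 0" if "n \<notin> range ?g" for n
  proof (rule ccontr)
    assume "?f n \<noteq> 0"
    then have "K \<le> n" "(n - K) mod m = j" by (auto split: if_splits)
    moreover have "(n - K) mod m + m * ((n - K) div m) = n - K" by (rule mod_mult_div_eq)
    ultimately have "n = ?g ((n - K) div m)" by linarith
    then show False using that by blast
  qed
  have "(\<lambda>k. ?f (?g k)) sums (x^(K+j) / (1 - x^m))"
  proof -
    have "norm (x^m) < 1" using assms by (simp add: norm_power power_less_one_iff)
    then have "(\<lambda>k. x^(K+j) * (x^m)^k) sums (x^(K+j) * (1 / (1 - x^m)))"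
      by (intro sums_mult geometric_sums)
    moreover have "?f (?g k) = x^(K+j) * (x^m)^k" for k
      using assms(2) by (simp add: power_add power_mult)
    ultimately show ?thesis by simp
  qed
  then show ?thesis using sums_mono_reindex[of ?g ?f, OF mono zero] by blast
qed

lemma periodic_digits_sums:
  fixes x :: "'a::{real_normed_field,banach}"
  assumes "norm x < 1" "A \<subseteq> {..<K}" "W \<subseteq> {..<4}"
  shows "(\<lambda>n. of_nat (periodic_digits A K W n) * x^n) sums periodic_value A K W x"
proof -
  have "finite A" "finite W" using assms(2,3) finite_subset by blast+
  have split: "of_nat (periodic_digits A K W n) * x^n = (if n \<in> A then x^n else 0) +
      (\<Sum>j\<in>W. if K \<le> n \<and> (n - K) mod 4 = j then x^n else 0)" for n
  proof (cases "n < K")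
    case True
    then show ?thesis by (simp add: periodic_digits_def)
  next
    case False
    then have "n \<notin> A" using assms(2) by auto
    with False show ?thesis using \<open>finite W\<close> by (simp add: periodic_digits_def sum.delta)
  qed
  have "(\<lambda>n. if n \<in> A then x^n else 0) sums (\<Sum>i\<in>A. x^i)"
    by (rule sums_If_finite_set[OF \<open>finite A\<close>])
  moreover have "(\<lambda>n. \<Sum>j\<in>W. if K \<le> n \<and> (n - K) mod 4 = j then x^n else 0)
      sums (\<Sum>j\<in>W. x^(K+j) / (1 - x^4))"
    using assms(1,3) by (intro sums_sum sums_residue_class_powers) auto
  ultimately show ?thesis
    unfolding split periodic_value_def sum_divide_distrib by (rule sums_add)
qed

lemma periodic_digits_tail_sums:
  fixes x :: "'a::{real_normed_field,banach}"
  assumes "norm x < 1" "4 \<le> K" "A \<subseteq> {4..<K}" "W \<subseteq> {..<4}"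
  shows "(\<lambda>n. of_nat (periodic_digits A K W (n+4)) * x^(n+4)) sums periodic_value A K W x"
proof -
  have "(\<Sum>i<4. of_nat (periodic_digits A K W i) * x^i) = 0"
    using assms(2,3) by (intro sum.neutral) (auto simp: periodic_digits_def)
  moreover have "(\<lambda>n. of_nat (periodic_digits A K W n) * x^n) sums periodic_value A K W x"
    using assms by (intro periodic_digits_sums) auto
  ultimately show ?thesis
    using sums_iff_shift[of "\<lambda>n. of_nat (periodic_digits A K W n) * x^n" 4] by simp
qed

lemma periodic_value_of_real:
  "periodic_value A K W (of_real x :: 'a::real_field) = of_real (periodic_value A K W x)"
  by (simp add: periodic_value_def)

lemma periodic_value_diff_eqI:
  fixes x :: "'a::field"
  assumes "x^4 \<noteq> 1"
    and "((\<Sum>i\<in>A. x^i) - (\<Sum>i\<in>A'. x^i)) * (1 - x^4) + (\<Sum>j\<in>W. x^(K+j)) - (\<Sum>j\<in>W'. x^(K+j))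
           = f * (1 - x^4)"
  shows "periodic_value A K W x - periodic_value A' K W' x = f"
proof -
  have D: "1 - x^4 \<noteq> 0" using assms(1) by simp
  have "periodic_value A K W x - periodic_value A' K W' x
      = (((\<Sum>i\<in>A. x^i) - (\<Sum>i\<in>A'. x^i)) * (1 - x^4) + (\<Sum>j\<in>W. x^(K+j)) - (\<Sum>j\<in>W'. x^(K+j))) / (1 - x^4)"
    unfolding periodic_value_def using D
    by (simp add: diff_divide_distrib add_divide_distrib nonzero_mult_div_cancel_right)
  also have "\<dots> = f" using assms(2) D by simp
  finally show ?thesis .
qed

lemma Dinf_from_eventually_periodic:
  assumes "0 < p" "l \<le> K" "\<And>n. K \<le> n \<Longrightarrow> d (n + p) = d n" "\<And>i. l \<le> i \<Longrightarrow> d i \<in> {0, 1}"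
    and "\<forall>i\<in>{l..<K+p}. \<not> (d i = 1 \<and> d (i+1) = 1 \<and> d (i+2) = 1 \<and> d (i+3) = 1)"
  shows "Dinf_from l d"
proof -
  have "\<not> (d i = 1 \<and> d (i+1) = 1 \<and> d (i+2) = 1 \<and> d (i+3) = 1)" if "l \<le> i" for i
    using that
  proof (induction i rule: less_induct)
    case (less i)
    show ?case
    proof (cases "i < K + p")
      case True
      then show ?thesis using assms(5) less.prems by auto
    next
      case False
      then have "d (i - p + k) = d (i + k)" for k
        using assms(3)[of "i - p + k"] by (simp add: algebra_simps)
      moreover have "\<not> (d (i-p) = 1 \<and> d (i-p+1) = 1 \<and> d (i-p+2) = 1 \<and> d (i-p+3) = 1)"
        using False assms(1,2) by (intro less.IH) auto
      ultimately show ?thesis by (metis add_0_right)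
    qed
  qed
  then show ?thesis using assms(4) unfolding Dinf_from_def by blast
qed

lemma Dinf_from_periodic_digits:
  assumes "4 \<le> K"
    and "\<forall>i\<in>{4..<K+4}. \<not> (periodic_digits A K W i = 1 \<and> periodic_digits A K W (i+1) = 1 \<and>
           periodic_digits A K W (i+2) = 1 \<and> periodic_digits A K W (i+3) = 1)"
  shows "Dinf_from 4 (periodic_digits A K W)"
proof (rule Dinf_from_eventually_periodic[OF _ assms(1) _ _ assms(2)])
  fix n assume "K \<le> n"
  then have "n + 4 - K = (n - K) + 4" by simp
  then have "(n + 4 - K) mod 4 = (n - K) mod 4" by (simp only: mod_add_self2)
  then show "periodic_digits A K W (n + 4) = periodic_digits A K W n"
    using \<open>K \<le> n\<close> by (simp add: periodic_digits_def)
qed (simp_all add: periodic_digits_def)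

section \<open>Differences of two expansions\<close>

definition power_int_sum :: "int set \<Rightarrow> 'a::field \<Rightarrow> 'a" where
  "power_int_sum J x = (\<Sum>i\<in>J. x powi i)"

lemma power_int_sum_of_real:
  "power_int_sum J (of_real x :: 'a::{real_field}) = of_real (power_int_sum J x)"
  by (simp add: power_int_sum_def)

definition expansion_difference :: "real \<Rightarrow> complex \<Rightarrow> bool" where
  "expansion_difference u2 u3 \<longleftrightarrow> (\<exists>eps eps'. Dinf_from 4 eps \<and> Dinf_from 4 eps' \<and>
    (\<lambda>n. of_nat (eps (n+4)) * beta2 ^ (n+4)) sums
      (u2 + (\<Sum>n. of_nat (eps' (n+4)) * beta2 ^ (n+4))) \<and>
    summable (\<lambda>n. of_nat (eps' (n+4)) * beta2 ^ (n+4)) \<and>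
    (\<lambda>n. of_nat (eps (n+4)) * beta3 ^ (n+4)) sums
      (u3 + (\<Sum>n. of_nat (eps' (n+4)) * beta3 ^ (n+4))) \<and>
    summable (\<lambda>n. of_nat (eps' (n+4)) * beta3 ^ (n+4)))"

lemma sums_diff_suminf:
  fixes f g :: "nat \<Rightarrow> 'a::{topological_ab_group_add, t2_space}"
  assumes "f sums s" "g sums t"
  shows "f sums ((s - t) + suminf g)"
  using assms by (simp add: sums_unique[symmetric])

lemma sums_swap_diff_suminf:
  fixes f g :: "nat \<Rightarrow> 'a::{topological_ab_group_add, t2_space}"
  assumes "f sums (u + suminf g)" "summable g"
  shows "g sums (- u + suminf f)" "summable f"
proof -
  have "suminf f = u + suminf g" using assms(1) by (rule sums_unique[symmetric])
  then show "g sums (- u + suminf f)" using assms(2) by (simp add: summable_sums)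
  show "summable f" using assms(1) by (rule sums_summable)
qed

lemma expansion_difference_uminus:
  assumes "expansion_difference u2 u3"
  shows "expansion_difference (- u2) (- u3)"
proof -
  obtain eps eps' where "Dinf_from 4 eps" "Dinf_from 4 eps'"
    and 2: "(\<lambda>n. of_nat (eps (n+4)) * beta2 ^ (n+4)) sums
              (u2 + (\<Sum>n. of_nat (eps' (n+4)) * beta2 ^ (n+4)))"
           "summable (\<lambda>n. of_nat (eps' (n+4)) * beta2 ^ (n+4))"
    and 3: "(\<lambda>n. of_nat (eps (n+4)) * beta3 ^ (n+4)) sums
              (u3 + (\<Sum>n. of_nat (eps' (n+4)) * beta3 ^ (n+4)))"
           "summable (\<lambda>n. of_nat (eps' (n+4)) * beta3 ^ (n+4))"
    using assms unfolding expansion_difference_def by blast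
  then show ?thesis
    unfolding expansion_difference_def
    using sums_swap_diff_suminf[OF 2] sums_swap_diff_suminf[OF 3] by blast
qed

lemma expansion_difference_periodic:
  assumes "4 \<le> K" "A \<subseteq> {4..<K}" "W \<subseteq> {..<4}" "A' \<subseteq> {4..<K}" "W' \<subseteq> {..<4}"
    and "Dinf_from 4 (periodic_digits A K W)" "Dinf_from 4 (periodic_digits A' K W')"
    \<comment> \<open>one identity over the complex numbers also covers \<open>beta2\<close>, via \<open>of_real\<close>\<close>
    and identity: "\<And>z::complex. tetranacci_poly z = 0 \<Longrightarrow> z \<noteq> 0 \<Longrightarrow>
      ((\<Sum>i\<in>A. z^i) - (\<Sum>i\<in>A'. z^i)) * (1 - z^4) + (\<Sum>j\<in>W. z^(K+j)) - (\<Sum>j\<in>W'. z^(K+j))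
        = power_int_sum J z * (1 - z^4)"
  shows "expansion_difference (power_int_sum J beta2) (power_int_sum J beta3)"
proof -
  have identity_at: "periodic_value A K W z - periodic_value A' K W' z = power_int_sum J z"
    if "tetranacci_poly z = 0" "norm z < 1" for z :: complex
  proof (rule periodic_value_diff_eqI)
    have "norm (z^4) < 1" using that(2) by (simp add: norm_power power_less_one_iff)
    then show "z^4 \<noteq> 1" by auto
    have "z \<noteq> 0" using that(1) by (auto simp: tetranacci_poly_def)
    with that(1) show "((\<Sum>i\<in>A. z^i) - (\<Sum>i\<in>A'. z^i)) * (1 - z^4) + (\<Sum>j\<in>W. z^(K+j)) - (\<Sum>j\<in>W'. z^(K+j))
        = power_int_sum J z * (1 - z^4)" by (rule identity)
  qed
  have beta2_complex: "tetranacci_poly (of_real beta2 :: complex) = 0" "norm (of_real beta2 :: complex) < 1"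
    using tetranacci_poly_beta2 norm_beta2 by (simp_all add: tetranacci_poly_of_real)
  have "of_real (periodic_value A K W beta2 - periodic_value A' K W' beta2) =
        (of_real (power_int_sum J beta2) :: complex)"
    using identity_at[OF beta2_complex] by (simp add: periodic_value_of_real power_int_sum_of_real)
  then have 2: "periodic_value A K W beta2 - periodic_value A' K W' beta2 = power_int_sum J beta2"
    by (simp only: of_real_eq_iff)
  have 3: "periodic_value A K W beta3 - periodic_value A' K W' beta3 = power_int_sum J beta3"
    using identity_at tetranacci_poly_beta3 norm_beta3 by blast
  have sums2: "(\<lambda>n. of_nat (periodic_digits A K W (n+4)) * beta2^(n+4)) sums periodic_value A K W beta2"
    "(\<lambda>n. of_nat (periodic_digits A' K W' (n+4)) * beta2^(n+4)) sums periodic_value A' K W' beta2"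
    using assms norm_beta2 by (intro periodic_digits_tail_sums; simp)+
  have sums3: "(\<lambda>n. of_nat (periodic_digits A K W (n+4)) * beta3^(n+4)) sums periodic_value A K W beta3"
    "(\<lambda>n. of_nat (periodic_digits A' K W' (n+4)) * beta3^(n+4)) sums periodic_value A' K W' beta3"
    using assms norm_beta3 by (intro periodic_digits_tail_sums; simp)+
  show ?thesis
    unfolding expansion_difference_def
    using assms(6,7) sums_diff_suminf[OF sums2] sums_diff_suminf[OF sums3] 2 3
      sums_summable[OF sums2(2)] sums_summable[OF sums3(2)] by auto
qed

lemma proper_subsets_of_0123:
  fixes J :: "int set"
  assumes "J \<subseteq> {0,1,2,3}" "J \<noteq> {0,1,2,3}"
  shows "J \<in> {{}, {0}, {1}, {2}, {3}, {0,1}, {0,2}, {0,3}, {1,2}, {1,3}, {2,3},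
    {0,1,2}, {0,1,3}, {0,2,3}, {1,2,3}}"
proof -
  have "J \<in> Pow {0,1,2,3}" using assms(1) by simp
  then have "J \<in> {{}, {0}, {1}, {2}, {3}, {0,1}, {0,2}, {0,3}, {1,2}, {1,3}, {2,3},
    {0,1,2}, {0,1,3}, {0,2,3}, {1,2,3}, {0,1,2,3}}" by (simp add: Pow_insert insert_commute)
  then show ?thesis using assms(2) by simp
qed

definition S_exponent_sets :: "int set set" where
  "S_exponent_sets = {J. J \<subseteq> {0,1,2,3} \<and> J \<noteq> {0,1,2,3}} \<union> {{-1,0,2}, {-2,-1,1}, {-3,-2,0,3}}"

lemma S_exponent_sets_explicit:
  assumes "J \<in> S_exponent_sets"
  shows "J \<in> {{}, {0}, {1}, {2}, {3}, {0,1}, {0,2}, {0,3}, {1,2}, {1,3}, {2,3},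
     {0,1,2}, {0,1,3}, {0,2,3}, {1,2,3}, {-1,0,2}, {-2,-1,1}, {-3,-2,0,3}}"
proof -
  from assms have "J \<in> {{}, {0}, {1}, {2}, {3}, {0,1}, {0,2}, {0,3}, {1,2}, {1,3}, {2,3},
     {0,1,2}, {0,1,3}, {0,2,3}, {1,2,3}} \<union> {{-1,0,2}, {-2,-1,1}, {-3,-2,0,3}}"
    unfolding S_exponent_sets_def
  proof (rule UnE)
    assume "J \<in> {J. J \<subseteq> {0,1,2,3} \<and> J \<noteq> {0,1,2,3}}"
    then show ?thesis by (intro UnI1 proper_subsets_of_0123) auto
  qed (rule UnI2)
  then show ?thesis by (simp only: Un_insert_left Un_empty_left)
qed

lemmas expansion_check_simps = power_int_sum_def power_int_minus
  field_simps Dinf_from_periodic_digits atLeastLessThan_upt periodic_digits_def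

lemma expansion_difference_S_exponent_sets:
  assumes "J \<in> S_exponent_sets"
  shows "expansion_difference (power_int_sum J beta2) (power_int_sum J beta3)"
proof -
  have "J \<in> {{}, {0}, {1}, {2}, {3}, {0,1}, {0,2}, {0,3}, {1,2}, {1,3}, {2,3},
     {0,1,2}, {0,1,3}, {0,2,3}, {1,2,3}, {-1,0,2}, {-2,-1,1}, {-3,-2,0,3}}"
    using assms by (rule S_exponent_sets_explicit)
  \<comment> \<open>Witnesses \<open>K A W A' W'\<close> in the order of the list above.\<close>
  then show ?thesis
    apply (elim insertE emptyE; hypsubst_thin)
    subgoal by (rule expansion_difference_periodic[of 4 "{}" "{}" "{}" "{}"])
        (simp add: expansion_check_simps; unfold tetranacci_poly_def; algebra)+
    subgoal by (rule expansion_difference_periodic[of 4 "{}" "{0}" "{}" "{1}"])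
        (simp add: expansion_check_simps; unfold tetranacci_poly_def; algebra)+
    subgoal by (rule expansion_difference_periodic[of 4 "{}" "{1}" "{}" "{2}"])
        (simp add: expansion_check_simps; unfold tetranacci_poly_def; algebra)+
    subgoal by (rule expansion_difference_periodic[of 5 "{}" "{1}" "{}" "{2}"])
        (simp add: expansion_check_simps; unfold tetranacci_poly_def; algebra)+
    subgoal by (rule expansion_difference_periodic[of 4 "{}" "{}" "{}" "{0,1,2}"])
        (simp add: expansion_check_simps; unfold tetranacci_poly_def; algebra)+
    subgoal by (rule expansion_difference_periodic[of 4 "{}" "{0}" "{}" "{2}"])
        (simp add: expansion_check_simps; unfold tetranacci_poly_def; algebra)+
    subgoal by (rule expansion_difference_periodic[of 5 "{4}" "{1,3}" "{}" "{0,2}"])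
        (simp add: expansion_check_simps; unfold tetranacci_poly_def; algebra)+
    subgoal by (rule expansion_difference_periodic[of 6 "{4}" "{1}" "{5}" "{3}"])
        (simp add: expansion_check_simps; unfold tetranacci_poly_def; algebra)+
    subgoal by (rule expansion_difference_periodic[of 5 "{}" "{0}" "{}" "{2}"])
        (simp add: expansion_check_simps; unfold tetranacci_poly_def; algebra)+
    subgoal by (rule expansion_difference_periodic[of 6 "{5}" "{1,3}" "{}" "{0,2}"])
        (simp add: expansion_check_simps; unfold tetranacci_poly_def; algebra)+
    subgoal by (rule expansion_difference_periodic[of 8 "{6}" "{}" "{4,5}" "{}"])
        (simp add: expansion_check_simps; unfold tetranacci_poly_def; algebra)+
    subgoal by (rule expansion_difference_periodic[of 5 "{4}" "{3}" "{}" "{2}"])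
        (simp add: expansion_check_simps; unfold tetranacci_poly_def; algebra)+
    subgoal by (rule expansion_difference_periodic[of 6 "{4}" "{1}" "{}" "{0}"])
        (simp add: expansion_check_simps; unfold tetranacci_poly_def; algebra)+
    subgoal by (rule expansion_difference_periodic[of 6 "{4}" "{0}" "{5}" "{3}"])
        (simp add: expansion_check_simps; unfold tetranacci_poly_def; algebra)+
    subgoal by (rule expansion_difference_periodic[of 7 "{5}" "{}" "{4}" "{}"])
        (simp add: expansion_check_simps; unfold tetranacci_poly_def; algebra)+
    subgoal by (rule expansion_difference_periodic[of 6 "{4}" "{0,1}" "{4,5}" "{2,3}"])
        (simp add: expansion_check_simps; unfold tetranacci_poly_def; algebra)+
    subgoal by (rule expansion_difference_periodic[of 6 "{5}" "{0,3}" "{4}" "{1,2}"])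
        (simp add: expansion_check_simps; unfold tetranacci_poly_def; algebra)+
    subgoal by (rule expansion_difference_periodic[of 5 "{4}" "{0,3}" "{}" "{1,2}"])
        (simp add: expansion_check_simps; unfold tetranacci_poly_def; algebra)+
    done
qed

lemma lincomb_eq_power_int_sums:
  "lincomb c I = ((\<Sum>i\<in>I. of_int (c i) * beta2 powi i), (\<Sum>i\<in>I. of_int (c i) * beta3 powi i))"
  by (simp add: lincomb_def alpha_def)

lemma sum_zero_one_coeffs:
  assumes "finite I" "\<forall>i. c i \<in> {0, 1 :: int}"
  shows "(\<Sum>i\<in>I. of_int (s * c i) * f i) = of_int s * (\<Sum>i\<in>{i\<in>I. c i = 1}. f i)"
proof -
  have "of_int (s * c i) * f i = of_int s * (if c i = 1 then f i else 0)" for i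
    using assms(2)[rule_format, of i] by auto
  then show ?thesis using assms(1) by (simp add: sum.inter_filter sum_distrib_left)
qed

lemma lincomb_const:
  "lincomb (\<lambda>_. s) J = (of_int s * power_int_sum J beta2, of_int s * power_int_sum J beta3)"
  by (simp add: lincomb_eq_power_int_sums power_int_sum_def sum_distrib_left)

lemma S_elements:
  assumes "u \<in> S"
  shows "\<exists>J\<in>S_exponent_sets. \<exists>s\<in>{1, -1}.
    u = (of_int s * power_int_sum J beta2, of_int s * power_int_sum J beta3)"
  using assms unfolding S_def
proof (elim UnE)
  assume "u \<in> {lincomb (\<lambda>i. s * c i) {0..3} | s c.
    s \<in> {1, -1} \<and> (\<forall>i. c i \<in> {0, 1}) \<and> \<not> (\<forall>i\<in>{0..3}. c i = 1)}"
  then obtain s c where u: "u = lincomb (\<lambda>i. s * c i) {0..3}" and s: "s \<in> {1, -1}"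
    and c: "\<forall>i. c i \<in> {0, 1}" "\<not> (\<forall>i\<in>{0..3}. c i = 1)"
    by blast
  define J where "J = {i \<in> {0..3}. c i = 1}"
  have "J \<subseteq> {0,1,2,3}" unfolding J_def by auto
  moreover obtain i where "i \<in> {0..3}" "c i \<noteq> 1" using c(2) by blast
  then have "i \<in> {0,1,2,3} - J" unfolding J_def by auto
  then have "J \<noteq> {0,1,2,3}" by blast
  ultimately have "J \<in> S_exponent_sets" unfolding S_exponent_sets_def by blast
  moreover have "u = (of_int s * power_int_sum J beta2, of_int s * power_int_sum J beta3)"
    using u unfolding lincomb_eq_power_int_sums power_int_sum_def J_def
    by (simp only: sum_zero_one_coeffs[OF finite_atLeastAtMost_int c(1)])
  ultimately show ?thesis using s by blast
next
  assume "u \<in> {lincomb (\<lambda>_. s) {-1, 0, 2} | s. s \<in> {1, -1}}"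
  moreover have "{-1, 0, 2} \<in> S_exponent_sets" unfolding S_exponent_sets_def by blast
  ultimately show ?thesis unfolding lincomb_const by blast
next
  assume "u \<in> {lincomb (\<lambda>_. s) {-2, -1, 1} | s. s \<in> {1, -1}}"
  moreover have "{-2, -1, 1} \<in> S_exponent_sets" unfolding S_exponent_sets_def by blast
  ultimately show ?thesis unfolding lincomb_const by blast
next
  assume "u \<in> {lincomb (\<lambda>_. s) {-3, -2, 0, 3} | s. s \<in> {1, -1}}"
  moreover have "{-3, -2, 0, 3} \<in> S_exponent_sets" unfolding S_exponent_sets_def by blast
  ultimately show ?thesis unfolding lincomb_const by blast
qed

theorem lemma3p6:
  fixes u :: "real \<times> complex"
  assumes "u \<in> S"
  shows "\<exists>eps eps'. Dinf_from 4 eps \<and> Dinf_from 4 eps' \<and>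
    (\<lambda>n. of_nat (eps (n+4)) * beta2 ^ (n+4)) sums
      (fst u + (\<Sum>n. of_nat (eps' (n+4)) * beta2 ^ (n+4))) \<and>
    summable (\<lambda>n. of_nat (eps' (n+4)) * beta2 ^ (n+4)) \<and>
    (\<lambda>n. of_nat (eps (n+4)) * beta3 ^ (n+4)) sums
      (snd u + (\<Sum>n. of_nat (eps' (n+4)) * beta3 ^ (n+4))) \<and>
    summable (\<lambda>n. of_nat (eps' (n+4)) * beta3 ^ (n+4))"
proof -
  obtain J s where J: "J \<in> S_exponent_sets" and s: "s \<in> {1, -1}"
    and u: "u = (of_int s * power_int_sum J beta2, of_int s * power_int_sum J beta3)"
    using S_elements[OF assms] by blast
  have "expansion_difference (power_int_sum J beta2) (power_int_sum J beta3)"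
    using J by (rule expansion_difference_S_exponent_sets)
  then have "expansion_difference (fst u) (snd u)"
    using s u expansion_difference_uminus by auto
  then show ?thesis unfolding expansion_difference_def .
qed

end
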